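(* Let the prior joint distribution of the losses $(X,Y)$ be bivariate normal with means $\mu_X,\mu_Y$, standard deviations $\sigma_X,\sigma_Y>0$ and correlation $\rho$ with $|\rho|<1$. Let $\sigma_1>0$, $\alpha\in(0,1)$, and let $\tilde\sigma_X^2$ denote the posterior variance of $X$ (under the entropy-pooling posterior described in the context). (i) Under the equality view $\tilde\sigma_X^2=\sigma_1^2$, $$\mathrm{CoVaR}_\alpha^{Y|\tilde\sigma_X^2=\sigma_1^2}=\mu_Y+\sigma_Y\left(1-\rho^2+\rho^2\frac{\sigma_1^2}{\sigma_X^2}\right)^{1/2}\Phi^{-1}(\alpha).$$ (ii) Under the inequality view $\tilde\sigma_X^2\le\sigma_1^2$: if $\sigma_X^2\le\sigma_1^2$, then $\mathrm{CoVaR}_\alpha^{Y|\tilde\sigma_X^2\le\sigma_1^2}=\mathrm{VaR}_\alpha^Y$; if $\sigma_X^2>\sigma_1^2$, then $\mathrm{CoVaR}_\alpha^{Y|\tilde\sigma_X^2\le\sigma_1^2}=\mathrm{CoVaR}_\alpha^{Y|\tilde\sigma_X^2=\sigma_1^2}$. (iii) Under the inequality view $\tilde\sigma_X^2\ge\sigma_1^2$: if $\sigma_X^2\ge\sigma_1^2$, then $\mathrm{CoVaR}_\alpha^{Y|\tilde\sigma_X^2\ge\sigma_1^2}=\mathrm{VaR}_\alpha^Y$; if $\sigma_X^2<\sigma_1^2$, then $\mathrm{CoVaR}_\alpha^{Y|\tilde\sigma_X^2\ge\sigma_1^2}=\mathrm{CoVaR}_\alpha^{Y|\tilde\sigma_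X^2=\sigma_1^2}$.
   Context: Entropy-pooling framework: given a "view" $V$ (a constraint on the posterior parameters), the posterior distribution of $(X,Y)$ is the bivariate normal distribution with means $\tilde\mu_X,\tilde\mu_Y$, standard deviations $\tilde\sigma_X,\tilde\sigma_Y>0$ and correlation $\tilde\rho\in(-1,1)$ that minimizes the relative entropy (Kullback–Leibler divergence) $\varepsilon(\tilde f,f)=\int \tilde f\,(\ln\tilde f-\ln f)$ of its density $\tilde f$ with respect to the prior density $f$, among all bivariate normal distributions satisfying $V$. The general CoVaR under view $V$ is $\mathrm{CoVaR}_\alpha^{Y|V}=\tilde\mu_Y+\tilde\sigma_Y\Phi^{-1}(\alpha)$ (the $\alpha$-quantile of the posterior marginal of $Y$), where $\Phi$ is the standard normal cdf. $\mathrm{VaR}_\alpha^Y=\mu_Y+\sigma_Y\Phi^{-1}(\alpha)$. *)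

theory Defs
  imports "HOL-Probability.Probability"
begin

type_synonym bvn = "real \<times> real \<times> real \<times> real \<times> real"

definition muX :: "bvn \<Rightarrow> real" where "muX p = fst p"
definition muY :: "bvn \<Rightarrow> real" where "muY p = fst (snd p)"
definition sdX :: "bvn \<Rightarrow> real" where "sdX p = fst (snd (snd p))"
definition sdY :: "bvn \<Rightarrow> real" where "sdY p = fst (snd (snd (snd p)))"
definition corr :: "bvn \<Rightarrow> real" where "corr p = snd (snd (snd (snd p)))"

definition bvn_valid :: "bvn \<Rightarrow> bool" where
  "bvn_valid p \<longleftrightarrow> sdX p > 0 \<and> sdY p > 0 \<and> \<bar>corr p\<bar> < 1"

definition bvn_density :: "bvn \<Rightarrow> real \<times> real \<Rightarrow> real" where
  "bvn_density p z =
     (let x = fst z; y = snd z; mx = muX p; my = muY p;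
          sx = sdX p; sy = sdY p; r = corr p
      in 1 / (2 * pi * sx * sy * sqrt (1 - r\<^sup>2)) *
         exp (- 1 / (2 * (1 - r\<^sup>2)) *
              ((x - mx)\<^sup>2 / sx\<^sup>2 - 2 * r * (x - mx) * (y - my) / (sx * sy)
               + (y - my)\<^sup>2 / sy\<^sup>2)))"

definition rel_entropy :: "bvn \<Rightarrow> bvn \<Rightarrow> real" where
  "rel_entropy q p =
     (\<integral>z. bvn_density q z * (ln (bvn_density q z) - ln (bvn_density p z)) \<partial>lborel)"

definition is_posterior :: "bvn \<Rightarrow> (bvn \<Rightarrow> bool) \<Rightarrow> bvn \<Rightarrow> bool" where
  "is_posterior prior V q \<longleftrightarrow>
     bvn_valid q \<and> V q \<and>
     (\<forall>q'. bvn_valid q' \<and> V q' \<longrightarrow> rel_entropy q prior \<le> rel_entropy q' prior)"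

definition Phi :: "real \<Rightarrow> real" where
  "Phi x = measure (density lborel std_normal_density) {..x}"

definition Phi_inv :: "real \<Rightarrow> real" where
  "Phi_inv a = (THE x. Phi x = a)"

definition VaR :: "real \<Rightarrow> bvn \<Rightarrow> real" where
  "VaR \<alpha> p = muY p + sdY p * Phi_inv \<alpha>"

definition CoVaR_is :: "real \<Rightarrow> bvn \<Rightarrow> (bvn \<Rightarrow> bool) \<Rightarrow> real \<Rightarrow> bool" where
  "CoVaR_is \<alpha> prior V c \<longleftrightarrow>
     (\<exists>q. is_posterior prior V q) \<and>
     (\<forall>q. is_posterior prior V q \<longrightarrow> muY q + sdY q * Phi_inv \<alpha> = c)"

end

(* Relative entropy between bivariate normals splits as
     KL(q, prior) = M + C + e((sdX q / sX)^2) + e(v q / v prior),    e(z) = (z - 1 - ln z) / 2,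
   where M >= 0 vanishes iff the means agree, C >= 0 vanishes iff the regression slopes of Y on X
   agree, and v is the residual variance of Y given X; e >= 0 vanishes only at 1 and is
   decreasing on (0,1], increasing on [1,oo).  A view that constrains only sdX therefore leaves
   the posterior with the prior's means and conditional law of Y given X, and with the sdX
   closest to the prior one in the sense of e: sX itself when it is admissible, otherwise s1.
   Keeping the conditional law gives sdY^2 = sY^2 (1 - r^2) + r^2 sY^2 sdX^2 / sX^2. *)
theory Submission
  imports Defs
begin

lemma integral_normal_density_shift:
  "(\<integral>y. normal_density \<mu> \<sigma> y * g (y - \<mu>) \<partial>lborel) = (\<integral>y. normal_density 0 \<sigma> y * g y \<partial>lborel)"
  using lborel_integral_real_affine[where c=1 and t=\<mu>, of "\<lambda>y. normal_density \<mu> \<sigma> y * g (y - \<mu>)"]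
  by (simp add: normal_density_def)

lemma integral_normal_central_moments:
  assumes "0 < \<sigma>"
  shows "(\<integral>x. normal_density \<mu> \<sigma> x * (x - \<mu>) ^ 0 \<partial>lborel) = 1"
    and "(\<integral>x. normal_density \<mu> \<sigma> x * (x - \<mu>) ^ 1 \<partial>lborel) = 0"
    and "(\<integral>x. normal_density \<mu> \<sigma> x * (x - \<mu>) ^ 2 \<partial>lborel) = \<sigma>\<^sup>2"
  using integral_normal_moment_even[OF assms, of \<mu> 0] integral_normal_moment_odd[OF assms, of \<mu> 0]
    integral_normal_moment_even[OF assms, of \<mu> 1]
  by simp_all

lemma has_bochner_integral_normal_kernel:
  fixes f m :: "real \<Rightarrow> real"
  assumes f: "integrable lborel f" and [measurable]: "m \<in> borel_measurable borel" and \<tau>: "0 < \<tau>"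
  shows "has_bochner_integral lborel
    (\<lambda>z::real \<times> real. f (fst z) * (normal_density (m (fst z)) \<tau> (snd z) * (snd z - m (fst z)) ^ j))
    (integral\<^sup>L lborel f * (\<integral>y. normal_density 0 \<tau> y * y ^ j \<partial>lborel))"
proof -
  define F where "F = (\<lambda>z::real \<times> real. f (fst z) * (normal_density (m (fst z)) \<tau> (snd z) * (snd z - m (fst z)) ^ j))"
  have [measurable]: "f \<in> borel_measurable borel"
    using f by (simp add: borel_measurable_integrable)
  have meas: "F \<in> borel_measurable (lborel \<Otimes>\<^sub>M lborel)"
    unfolding F_def normal_density_def by measurable
  have inner_norm: "(\<integral>y. norm (F (x, y)) \<partial>lborel) = \<bar>f x\<bar> * (\<integral>y. normal_density 0 \<tau> y * \<bar>y\<bar> ^ j \<partial>lborel)" for x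
    using integral_normal_density_shift[of "m x" \<tau> "\<lambda>y. \<bar>y\<bar> ^ j"]
    by (simp add: F_def abs_mult power_abs)
  have "integrable lborel (\<lambda>x. \<integral>y. norm (F (x, y)) \<partial>lborel)"
    unfolding inner_norm using f by (intro integrable_mult_left integrable_abs)
  moreover have "AE x in lborel. integrable lborel (\<lambda>y. F (x, y))"
    unfolding F_def by (auto intro!: integrable_mult_right integrable_normal_moment \<tau>)
  ultimately have int: "integrable (lborel \<Otimes>\<^sub>M lborel) F"
    by (rule lborel_pair.Fubini_integrable[OF meas])
  have "integral\<^sup>L lborel F = (\<integral>x. (\<integral>y. F (x, y) \<partial>lborel) \<partial>lborel)"
    using lborel_pair.integral_fst'[OF int] by (simp add: lborel_prod)
  also have "\<dots> = (\<integral>x. f x * (\<integral>y. normal_density 0 \<tau> y * y ^ j \<partial>lborel) \<partial>lborel)"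
    using integral_normal_density_shift[of "m _" \<tau> "\<lambda>y. y ^ j"] by (simp add: F_def)
  finally show ?thesis
    using int by (simp add: F_def has_bochner_integral_iff lborel_prod)
qed

lemma bvn_density_factor:
  assumes s: "0 < s" and t: "0 < t" and \<rho>: "\<bar>\<rho>\<bar> < 1"
  shows "bvn_density (a, b, s, t, \<rho>) (x, y) =
    normal_density a s x * normal_density (b + \<rho> * t / s * (x - a)) (t * sqrt (1 - \<rho>\<^sup>2)) y"
proof -
  have "0 < 1 - \<rho>\<^sup>2" using \<rho> by (simp add: abs_square_less_1)
  define k where "k = sqrt (1 - \<rho>\<^sup>2)"
  have k: "0 < k" "k\<^sup>2 = 1 - \<rho>\<^sup>2" using \<open>0 < 1 - \<rho>\<^sup>2\<close> by (auto simp: k_def)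
  have sqrt_s: "sqrt (2 * pi * s\<^sup>2) = sqrt (2 * pi) * s" using s by (simp add: real_sqrt_mult)
  have sqrt_tk: "sqrt (2 * pi * (t * k)\<^sup>2) = sqrt (2 * pi) * (t * k)" using t k by (simp add: real_sqrt_mult)
  have tk: "(t * k)\<^sup>2 = t\<^sup>2 * (1 - \<rho>\<^sup>2)" using k by (simp add: power_mult_distrib)
  have exponent: "- (x - a)\<^sup>2 / (2 * s\<^sup>2) + - (y - (b + \<rho> * t / s * (x - a)))\<^sup>2 / (2 * (t\<^sup>2 * (1 - \<rho>\<^sup>2))) =
     - 1 / (2 * (1 - \<rho>\<^sup>2)) *
       ((x - a)\<^sup>2 / s\<^sup>2 - 2 * \<rho> * (x - a) * (y - b) / (s * t) + (y - b)\<^sup>2 / t\<^sup>2)"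
    using s t \<open>0 < 1 - \<rho>\<^sup>2\<close> by (simp add: field_simps power2_eq_square)
  have "normal_density a s x * normal_density (b + \<rho> * t / s * (x - a)) (t * k) y =
     1 / (2 * pi * s * t * k) * exp (- (x - a)\<^sup>2 / (2 * s\<^sup>2) + - (y - (b + \<rho> * t / s * (x - a)))\<^sup>2 / (2 * (t * k)\<^sup>2))"
    unfolding normal_density_def sqrt_s sqrt_tk exp_add using s t k by simp
  also have "\<dots> = bvn_density (a, b, s, t, \<rho>) (x, y)"
    unfolding tk exponent by (simp add: bvn_density_def muX_def muY_def sdX_def sdY_def corr_def Let_def k_def)
  finally show ?thesis by (simp add: k_def)
qed

lemma has_bochner_integral_bvn_quadratic:
  assumes s: "0 < s" and t: "0 < t" and \<rho>: "\<bar>\<rho>\<bar> < 1"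
  shows "has_bochner_integral lborel (\<lambda>z. bvn_density (a, b, s, t, \<rho>) z *
      (K + A * (fst z - mx)\<^sup>2 + B * (fst z - mx) * (snd z - my) + C * (snd z - my)\<^sup>2))
    (K + A * (s\<^sup>2 + (a - mx)\<^sup>2) + B * (\<rho> * s * t + (a - mx) * (b - my)) + C * (t\<^sup>2 + (b - my)\<^sup>2))"
proof -
  have r2: "0 < 1 - \<rho>\<^sup>2" using \<rho> by (simp add: abs_square_less_1)
  define \<beta> where "\<beta> = \<rho> * t / s"
  define \<tau> where "\<tau> = t * sqrt (1 - \<rho>\<^sup>2)"
  define m where "m = (\<lambda>x. b + \<beta> * (x - a))"
  define d1 where "d1 = a - mx"
  define d2 where "d2 = b - my"
  have \<tau>: "0 < \<tau>" using t r2 by (simp add: \<tau>_def)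
  have \<tau>2: "\<tau>\<^sup>2 = t\<^sup>2 * (1 - \<rho>\<^sup>2)" using r2 by (simp add: \<tau>_def power_mult_distrib)
  have [measurable]: "m \<in> borel_measurable borel" unfolding m_def by measurable
  define M where "M = (\<lambda>i j (z::real \<times> real). (normal_density a s (fst z) * (fst z - a) ^ i) *
     (normal_density (m (fst z)) \<tau> (snd z) * (snd z - m (fst z)) ^ j))"
  define mom where "mom = (\<lambda>i. \<integral>x. normal_density a s x * (x - a) ^ i \<partial>lborel)"
  define kmom where "kmom = (\<lambda>j. \<integral>y. normal_density 0 \<tau> y * y ^ j \<partial>lborel)"
  have h: "has_bochner_integral lborel (M i j) (mom i * kmom j)" for i j
    unfolding M_def mom_def kmom_def
    by (rule has_bochner_integral_normal_kernel[OF integrable_normal_moment[OF s] _ \<tau>]) simp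
  have mom: "mom 0 = 1" "mom 1 = 0" "mom 2 = s\<^sup>2"
    unfolding mom_def using integral_normal_central_moments[OF s] by simp_all
  have kmom: "kmom 0 = 1" "kmom 1 = 0" "kmom 2 = \<tau>\<^sup>2"
    unfolding kmom_def using integral_normal_central_moments[OF \<tau>, of 0] by simp_all
  \<comment> \<open>Under the density, \<open>x - a\<close> and \<open>y - m x\<close> are independent centred normals:
    expand the quadratic in these coordinates.\<close>
  define c00 where "c00 = K + A * d1\<^sup>2 + B * d1 * d2 + C * d2\<^sup>2"
  define c10 where "c10 = 2 * A * d1 + B * (\<beta> * d1 + d2) + 2 * C * \<beta> * d2"
  define c01 where "c01 = B * d1 + 2 * C * d2"
  define c20 where "c20 = A + B * \<beta> + C * \<beta>\<^sup>2"
  define c11 where "c11 = B + 2 * C * \<beta>"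
  have H: "has_bochner_integral lborel (\<lambda>z. c00 * M 0 0 z + c10 * M 1 0 z + c01 * M 0 1 z
       + c20 * M 2 0 z + c11 * M 1 1 z + C * M 0 2 z)
     (c00 * (mom 0 * kmom 0) + c10 * (mom 1 * kmom 0) + c01 * (mom 0 * kmom 1)
       + c20 * (mom 2 * kmom 0) + c11 * (mom 1 * kmom 1) + C * (mom 0 * kmom 2))"
    by (intro has_bochner_integral_add has_bochner_integral_mult_right h)
  show ?thesis
  proof (rule has_bochner_integral_cong[THEN iffD1, OF refl _ _ H])
    fix z :: "real \<times> real"
    obtain x y where z: "z = (x, y)" by fastforce
    have "bvn_density (a, b, s, t, \<rho>) (x, y) = normal_density a s x * normal_density (m x) \<tau> y"
      unfolding m_def \<beta>_def \<tau>_def by (rule bvn_density_factor[OF s t \<rho>])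
    then show "c00 * M 0 0 z + c10 * M 1 0 z + c01 * M 0 1 z + c20 * M 2 0 z + c11 * M 1 1 z + C * M 0 2 z
      = bvn_density (a, b, s, t, \<rho>) z *
        (K + A * (fst z - mx)\<^sup>2 + B * (fst z - mx) * (snd z - my) + C * (snd z - my)\<^sup>2)"
      unfolding M_def z c00_def c10_def c01_def c20_def c11_def d1_def d2_def
      by (simp add: m_def power2_eq_square algebra_simps)
  next
    show "c00 * (mom 0 * kmom 0) + c10 * (mom 1 * kmom 0) + c01 * (mom 0 * kmom 1)
        + c20 * (mom 2 * kmom 0) + c11 * (mom 1 * kmom 1) + C * (mom 0 * kmom 2)
      = K + A * (s\<^sup>2 + (a - mx)\<^sup>2) + B * (\<rho> * s * t + (a - mx) * (b - my)) + C * (t\<^sup>2 + (b - my)\<^sup>2)"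
      using s unfolding mom kmom \<tau>2 c00_def c10_def c01_def c20_def c11_def d1_def d2_def \<beta>_def
      by (simp add: field_simps power2_eq_square)
  qed
qed

lemma ln_bvn_density:
  assumes s: "0 < s" and t: "0 < t" and \<rho>: "\<bar>\<rho>\<bar> < 1"
  shows "ln (bvn_density (a, b, s, t, \<rho>) z) = - ln (2 * pi * s * t * sqrt (1 - \<rho>\<^sup>2))
     + (- 1 / (2 * (1 - \<rho>\<^sup>2) * s\<^sup>2)) * (fst z - a)\<^sup>2
     + (\<rho> / ((1 - \<rho>\<^sup>2) * s * t)) * (fst z - a) * (snd z - b)
     + (- 1 / (2 * (1 - \<rho>\<^sup>2) * t\<^sup>2)) * (snd z - b)\<^sup>2"
proof -
  have r2: "0 < 1 - \<rho>\<^sup>2" using \<rho> by (simp add: abs_square_less_1)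
  have c: "0 < 2 * pi * s * t * sqrt (1 - \<rho>\<^sup>2)" using s t r2 by simp
  have "ln (bvn_density (a, b, s, t, \<rho>) z) = - ln (2 * pi * s * t * sqrt (1 - \<rho>\<^sup>2)) +
     - 1 / (2 * (1 - \<rho>\<^sup>2)) *
       ((fst z - a)\<^sup>2 / s\<^sup>2 - 2 * \<rho> * (fst z - a) * (snd z - b) / (s * t) + (snd z - b)\<^sup>2 / t\<^sup>2)"
    unfolding bvn_density_def Let_def muX_def muY_def sdX_def sdY_def corr_def fst_conv snd_conv
    using c by (subst ln_mult) (auto simp: ln_div mult.assoc)
  also have "\<dots> = - ln (2 * pi * s * t * sqrt (1 - \<rho>\<^sup>2))
     + (- 1 / (2 * (1 - \<rho>\<^sup>2) * s\<^sup>2)) * (fst z - a)\<^sup>2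
     + (\<rho> / ((1 - \<rho>\<^sup>2) * s * t)) * (fst z - a) * (snd z - b)
     + (- 1 / (2 * (1 - \<rho>\<^sup>2) * t\<^sup>2)) * (snd z - b)\<^sup>2"
  proof -
    have quad: "- 1 / (2 * d) * (u\<^sup>2 / s\<^sup>2 - 2 * \<rho> * u * v / (s * t) + v\<^sup>2 / t\<^sup>2)
      = (- 1 / (2 * d * s\<^sup>2)) * u\<^sup>2 + (\<rho> / (d * s * t)) * u * v + (- 1 / (2 * d * t\<^sup>2)) * v\<^sup>2"
      if "d \<noteq> 0" for d u v
      using s t that by (simp add: field_simps power2_eq_square)
    have "1 - \<rho>\<^sup>2 \<noteq> 0" using r2 by simp
    from quad[OF this, of "fst z - a" "snd z - b"] show ?thesis by linarith
  qed
  finally show ?thesis .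
qed

lemma rel_entropy_bvn:
  assumes s: "0 < s" and t: "0 < t" and \<rho>: "\<bar>\<rho>\<bar> < 1"
    and \<sigma>1: "0 < \<sigma>1" and \<sigma>2: "0 < \<sigma>2" and r: "\<bar>r\<bar> < 1"
  shows "rel_entropy (a, b, s, t, \<rho>) (m1, m2, \<sigma>1, \<sigma>2, r) =
    ((s / \<sigma>1)\<^sup>2 - 2 * r * \<rho> * (s / \<sigma>1) * (t / \<sigma>2) + (t / \<sigma>2)\<^sup>2
      + ((a - m1) / \<sigma>1)\<^sup>2 - 2 * r * ((a - m1) / \<sigma>1) * ((b - m2) / \<sigma>2) + ((b - m2) / \<sigma>2)\<^sup>2)
      / (2 * (1 - r\<^sup>2))
    - 1 + ln (\<sigma>1 * \<sigma>2 * sqrt (1 - r\<^sup>2) / (s * t * sqrt (1 - \<rho>\<^sup>2)))"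
proof -
  have "0 < 1 - \<rho>\<^sup>2" "0 < 1 - r\<^sup>2"
    using \<rho> r by (simp_all add: abs_square_less_1)
  then have nz: "1 - \<rho>\<^sup>2 \<noteq> 0" "1 - r\<^sup>2 \<noteq> 0" and sq: "0 < sqrt (1 - \<rho>\<^sup>2)" "0 < sqrt (1 - r\<^sup>2)"
    by simp_all
  note q = has_bochner_integral_bvn_quadratic[OF s t \<rho>, where a=a and b=b and mx=a and my=b and
     K="- ln (2 * pi * s * t * sqrt (1 - \<rho>\<^sup>2))" and A="- 1 / (2 * (1 - \<rho>\<^sup>2) * s\<^sup>2)"
     and B="\<rho> / ((1 - \<rho>\<^sup>2) * s * t)" and C="- 1 / (2 * (1 - \<rho>\<^sup>2) * t\<^sup>2)"]
  note p = has_bochner_integral_bvn_quadratic[OF s t \<rho>, where a=a and b=b and mx=m1 and my=m2 and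
     K="- ln (2 * pi * \<sigma>1 * \<sigma>2 * sqrt (1 - r\<^sup>2))" and A="- 1 / (2 * (1 - r\<^sup>2) * \<sigma>1\<^sup>2)"
     and B="r / ((1 - r\<^sup>2) * \<sigma>1 * \<sigma>2)" and C="- 1 / (2 * (1 - r\<^sup>2) * \<sigma>2\<^sup>2)"]
  have ln_ratio: "- ln (2 * pi * s * t * sqrt (1 - \<rho>\<^sup>2)) + ln (2 * pi * \<sigma>1 * \<sigma>2 * sqrt (1 - r\<^sup>2))
    = ln (\<sigma>1 * \<sigma>2 * sqrt (1 - r\<^sup>2) / (s * t * sqrt (1 - \<rho>\<^sup>2)))"
    using s t \<sigma>1 \<sigma>2 sq by (simp add: ln_div ln_mult)
  have entropy: "- 1 / (2 * d * s\<^sup>2) * (s\<^sup>2 + (a - a)\<^sup>2) + \<rho> / (d * s * t) * (\<rho> * s * t + (a - a) * (b - b))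
      + - 1 / (2 * d * t\<^sup>2) * (t\<^sup>2 + (b - b)\<^sup>2) = (\<rho>\<^sup>2 - 1) / d" if "d \<noteq> 0" for d
    using s t that by (simp add: field_simps power2_eq_square)
  have cross: "- 1 / (2 * d * \<sigma>1\<^sup>2) * (s\<^sup>2 + (a - m1)\<^sup>2) + r / (d * \<sigma>1 * \<sigma>2) * (\<rho> * s * t + (a - m1) * (b - m2))
      + - 1 / (2 * d * \<sigma>2\<^sup>2) * (t\<^sup>2 + (b - m2)\<^sup>2) =
    - ((s / \<sigma>1)\<^sup>2 - 2 * r * \<rho> * (s / \<sigma>1) * (t / \<sigma>2) + (t / \<sigma>2)\<^sup>2
      + ((a - m1) / \<sigma>1)\<^sup>2 - 2 * r * ((a - m1) / \<sigma>1) * ((b - m2) / \<sigma>2) + ((b - m2) / \<sigma>2)\<^sup>2) / (2 * d)"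
    if "d \<noteq> 0" for d
    using \<sigma>1 \<sigma>2 that by (simp add: field_simps power2_eq_square)
  have minus_one: "(\<rho>\<^sup>2 - 1) / (1 - \<rho>\<^sup>2) = - 1"
    using nz(1) by (simp add: divide_eq_eq)
  have "has_bochner_integral lborel
      (\<lambda>z. bvn_density (a, b, s, t, \<rho>) z *
        (ln (bvn_density (a, b, s, t, \<rho>) z) - ln (bvn_density (m1, m2, \<sigma>1, \<sigma>2, r) z)))
      (((s / \<sigma>1)\<^sup>2 - 2 * r * \<rho> * (s / \<sigma>1) * (t / \<sigma>2) + (t / \<sigma>2)\<^sup>2
      + ((a - m1) / \<sigma>1)\<^sup>2 - 2 * r * ((a - m1) / \<sigma>1) * ((b - m2) / \<sigma>2) + ((b - m2) / \<sigma>2)\<^sup>2)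
      / (2 * (1 - r\<^sup>2))
    - 1 + ln (\<sigma>1 * \<sigma>2 * sqrt (1 - r\<^sup>2) / (s * t * sqrt (1 - \<rho>\<^sup>2))))"
    apply (rule has_bochner_integral_cong[THEN iffD1, OF refl _ _ has_bochner_integral_diff[OF q p]])
    subgoal for z
      by (simp only: ln_bvn_density[OF s t \<rho>] ln_bvn_density[OF \<sigma>1 \<sigma>2 r] right_diff_distrib)
    subgoal
      using entropy[OF nz(1)] cross[OF nz(2)] ln_ratio minus_one by linarith
    done
  then show ?thesis
    unfolding rel_entropy_def by (rule has_bochner_integral_integral_eq)
qed

text \<open>The relative entropy of \<open>N(0, z)\<close> with respect to \<open>N(0, 1)\<close>.\<close>
definition var_divergence :: "real \<Rightarrow> real" where
  "var_divergence z = (z - 1 - ln z) / 2"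

lemma var_divergence_1 [simp]: "var_divergence 1 = 0"
  by (simp add: var_divergence_def)

lemma var_divergence_strict_antimono:
  assumes "0 < z" "z < z'" "z' \<le> 1"
  shows "var_divergence z' < var_divergence z"
proof -
  have "ln z - ln z' < (z - z') / z'"
    using assms by (intro ln_diff_less) auto
  also have "\<dots> \<le> z - z'"
    using assms by (simp add: divide_le_eq mult_le_cancel_left1 mult.commute)
  finally show ?thesis
    by (simp add: var_divergence_def)
qed

lemma var_divergence_strict_mono:
  assumes "1 \<le> z" "z < z'"
  shows "var_divergence z < var_divergence z'"
proof -
  have "ln z' - ln z < (z' - z) / z"
    using assms by (intro ln_diff_less) auto
  also have "\<dots> \<le> z' - z"
    using assms by (simp add: divide_le_eq mult_le_cancel_left1 mult.commute)
  finally show ?thesis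
    by (simp add: var_divergence_def)
qed

lemma var_divergence_pos:
  assumes "0 < z" "z \<noteq> 1"
  shows "0 < var_divergence z"
  using assms var_divergence_strict_antimono[of z 1] var_divergence_strict_mono[of 1 z]
  by (cases "z < 1") auto

lemma var_divergence_nonneg: "0 < z \<Longrightarrow> 0 \<le> var_divergence z"
  using var_divergence_pos[of z] by (cases "z = 1") auto

lemma correlation_form_completed_squares:
  fixes r \<rho> U W X Y :: real
  assumes "1 - r\<^sup>2 \<noteq> 0"
  shows "(U\<^sup>2 - 2 * r * \<rho> * U * W + W\<^sup>2 + X\<^sup>2 - 2 * r * X * Y + Y\<^sup>2) / (2 * (1 - r\<^sup>2)) =
      ((X - r * Y)\<^sup>2 + (1 - r\<^sup>2) * Y\<^sup>2) / (2 * (1 - r\<^sup>2)) + (\<rho> * W - r * U)\<^sup>2 / (2 * (1 - r\<^sup>2))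
      + U\<^sup>2 / 2 + W\<^sup>2 * (1 - \<rho>\<^sup>2) / (1 - r\<^sup>2) / 2"
proof -
  have num: "U\<^sup>2 - 2 * r * \<rho> * U * W + W\<^sup>2 + X\<^sup>2 - 2 * r * X * Y + Y\<^sup>2 =
      ((X - r * Y)\<^sup>2 + (1 - r\<^sup>2) * Y\<^sup>2) + (\<rho> * W - r * U)\<^sup>2 + (1 - r\<^sup>2) * U\<^sup>2 + W\<^sup>2 * (1 - \<rho>\<^sup>2)"
    by (simp add: power2_eq_square algebra_simps)
  have split: "(A + B + D * U\<^sup>2 + C) / (2 * D) = A / (2 * D) + B / (2 * D) + U\<^sup>2 / 2 + C / D / 2"
    if "D \<noteq> 0" for A B C D :: real
    using that by (simp add: field_simps)
  show ?thesis
    unfolding num by (rule split[OF assms])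
qed

lemma rel_entropy_bvn_decomposition:
  assumes s: "0 < s" and t: "0 < t" and \<rho>: "\<bar>\<rho>\<bar> < 1"
    and \<sigma>1: "0 < \<sigma>1" and \<sigma>2: "0 < \<sigma>2" and r: "\<bar>r\<bar> < 1"
  shows "rel_entropy (a, b, s, t, \<rho>) (m1, m2, \<sigma>1, \<sigma>2, r) =
    (((a - m1) / \<sigma>1 - r * ((b - m2) / \<sigma>2))\<^sup>2 + (1 - r\<^sup>2) * ((b - m2) / \<sigma>2)\<^sup>2) / (2 * (1 - r\<^sup>2))
    + (\<rho> * (t / \<sigma>2) - r * (s / \<sigma>1))\<^sup>2 / (2 * (1 - r\<^sup>2))
    + var_divergence ((s / \<sigma>1)\<^sup>2) + var_divergence ((t / \<sigma>2)\<^sup>2 * (1 - \<rho>\<^sup>2) / (1 - r\<^sup>2))"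
proof -
  have "0 < 1 - \<rho>\<^sup>2" "0 < 1 - r\<^sup>2"
    using \<rho> r by (simp_all add: abs_square_less_1)
  then have nz: "1 - r\<^sup>2 \<noteq> 0" by simp
  define R where "R = \<sigma>1 * \<sigma>2 * sqrt (1 - r\<^sup>2) / (s * t * sqrt (1 - \<rho>\<^sup>2))"
  have "0 < R"
    using s t \<sigma>1 \<sigma>2 \<open>0 < 1 - \<rho>\<^sup>2\<close> \<open>0 < 1 - r\<^sup>2\<close> by (simp add: R_def)
  have "ln ((s / \<sigma>1)\<^sup>2) + ln ((t / \<sigma>2)\<^sup>2 * (1 - \<rho>\<^sup>2) / (1 - r\<^sup>2))
      = ln ((s / \<sigma>1)\<^sup>2 * ((t / \<sigma>2)\<^sup>2 * (1 - \<rho>\<^sup>2) / (1 - r\<^sup>2)))"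
    using s t \<sigma>1 \<sigma>2 \<open>0 < 1 - \<rho>\<^sup>2\<close> \<open>0 < 1 - r\<^sup>2\<close> by (intro ln_mult_pos[symmetric]) auto
  also have "(s / \<sigma>1)\<^sup>2 * ((t / \<sigma>2)\<^sup>2 * (1 - \<rho>\<^sup>2) / (1 - r\<^sup>2)) = (1 / R)\<^sup>2"
    using \<open>0 < 1 - \<rho>\<^sup>2\<close> \<open>0 < 1 - r\<^sup>2\<close> by (simp add: R_def power_divide power_mult_distrib)
  also have "ln ((1 / R)\<^sup>2) = - 2 * ln R"
    using \<open>0 < R\<close> by (simp add: ln_realpow ln_div)
  finally have ln_R: "ln R = - (ln ((s / \<sigma>1)\<^sup>2) + ln ((t / \<sigma>2)\<^sup>2 * (1 - \<rho>\<^sup>2) / (1 - r\<^sup>2))) / 2"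
    by simp
  have collect: "Q - 1 + - (ln u + ln z) / 2 = M + C + var_divergence u + var_divergence z"
    if "Q = M + C + u / 2 + z / 2" for Q M C u z :: real
    using that by (simp add: var_divergence_def field_simps)
  show ?thesis
    unfolding rel_entropy_bvn[OF s t \<rho> \<sigma>1 \<sigma>2 r] R_def[symmetric] ln_R
    by (rule collect[OF correlation_form_completed_squares[OF nz]])
qed

context
  fixes mX mY sX sY r :: real
  assumes sX: "0 < sX" and sY: "0 < sY" and r: "\<bar>r\<bar> < 1"
begin

definition sdY_with_sdX :: "real \<Rightarrow> real" where
  "sdY_with_sdX s = sY * sqrt (1 - r\<^sup>2 + r\<^sup>2 * s\<^sup>2 / sX\<^sup>2)"

text \<open>The bivariate normal whose \<open>X\<close>-marginal is \<open>N(mX, s\<^sup>2)\<close> and whose conditional law of \<open>Y\<close>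
  given \<open>X\<close> is that of the prior.\<close>
definition prior_with_sdX :: "real \<Rightarrow> bvn" where
  "prior_with_sdX s = (mX, mY, s, sdY_with_sdX s, r * (s / sX) * sY / sdY_with_sdX s)"

lemma one_minus_r_squared_pos: "0 < 1 - r\<^sup>2"
  using r by (simp add: abs_square_less_1)

lemma sdY_with_sdX_pos: "0 < sdY_with_sdX s"
proof -
  have "0 < 1 - r\<^sup>2 + r\<^sup>2 * s\<^sup>2 / sX\<^sup>2"
    using one_minus_r_squared_pos by (simp add: add_pos_nonneg)
  then show ?thesis
    unfolding sdY_with_sdX_def using sY by simp
qed

lemma sdY_with_sdX_prior: "sdY_with_sdX sX = sY"
  using sX sY by (simp add: sdY_with_sdX_def)

lemma prior_with_sdX_simps:
  "sdX (prior_with_sdX s) = s" "muY (prior_with_sdX s) = mY" "sdY (prior_with_sdX s) = sdY_with_sdX s"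
  by (simp_all add: prior_with_sdX_def sdX_def muY_def sdY_def)

lemma prior_with_sdX_regression:
  fixes s :: real
  defines "t \<equiv> sdY_with_sdX s" and "\<rho> \<equiv> r * (s / sX) * sY / sdY_with_sdX s"
  shows "\<rho> * (t / sY) = r * (s / sX)" and "(t / sY)\<^sup>2 * (1 - \<rho>\<^sup>2) = 1 - r\<^sup>2"
proof -
  have "t \<noteq> 0"
    using sdY_with_sdX_pos[of s] by (simp add: t_def)
  then show slope: "\<rho> * (t / sY) = r * (s / sX)"
    unfolding \<rho>_def t_def[symmetric] using sY by simp
  have t2: "(t / sY)\<^sup>2 = 1 - r\<^sup>2 + r\<^sup>2 * s\<^sup>2 / sX\<^sup>2"
    unfolding t_def sdY_with_sdX_def using sY one_minus_r_squared_pos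
    by (simp add: power_mult_distrib add_pos_nonneg)
  have sq: "w\<^sup>2 * (1 - \<rho>\<^sup>2) = w\<^sup>2 - (\<rho> * w)\<^sup>2" for w :: real
    by (simp add: power2_eq_square algebra_simps)
  have "(t / sY)\<^sup>2 * (1 - \<rho>\<^sup>2) = (t / sY)\<^sup>2 - (\<rho> * (t / sY))\<^sup>2"
    by (rule sq)
  also have "\<dots> = (1 - r\<^sup>2 + r\<^sup>2 * s\<^sup>2 / sX\<^sup>2) - (r * (s / sX))\<^sup>2"
    unfolding t2 slope ..
  also have "\<dots> = 1 - r\<^sup>2"
    by (simp add: power_mult_distrib power_divide)
  finally show "(t / sY)\<^sup>2 * (1 - \<rho>\<^sup>2) = 1 - r\<^sup>2" .
qed

lemma regression_imp_sdY_with_sdX: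
  assumes t: "0 < t" and slope: "\<rho> * (t / sY) = r * (s / sX)"
    and resid: "(t / sY)\<^sup>2 * (1 - \<rho>\<^sup>2) = 1 - r\<^sup>2"
  shows "t = sdY_with_sdX s"
proof -
  have sq: "w\<^sup>2 = w\<^sup>2 * (1 - \<rho>\<^sup>2) + (\<rho> * w)\<^sup>2" for w :: real
    by (simp add: power2_eq_square algebra_simps)
  have "(t / sY)\<^sup>2 = (t / sY)\<^sup>2 * (1 - \<rho>\<^sup>2) + (\<rho> * (t / sY))\<^sup>2"
    by (rule sq)
  also have "\<dots> = 1 - r\<^sup>2 + r\<^sup>2 * s\<^sup>2 / sX\<^sup>2"
    unfolding resid slope by (simp add: power_mult_distrib power_divide)
  finally have "sqrt (1 - r\<^sup>2 + r\<^sup>2 * s\<^sup>2 / sX\<^sup>2) = t / sY"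
    using t sY by (intro real_sqrt_unique) simp_all
  then show ?thesis
    using sY by (simp add: sdY_with_sdX_def)
qed

lemma bvn_valid_prior_with_sdX:
  assumes "0 < s"
  shows "bvn_valid (prior_with_sdX s)"
proof -
  define t where "t = sdY_with_sdX s"
  define \<rho> where "\<rho> = r * (s / sX) * sY / sdY_with_sdX s"
  have "0 < (t / sY)\<^sup>2"
    using sdY_with_sdX_pos[of s] sY by (simp add: t_def)
  moreover have "(t / sY)\<^sup>2 * (1 - \<rho>\<^sup>2) = 1 - r\<^sup>2"
    unfolding t_def \<rho>_def by (rule prior_with_sdX_regression)
  ultimately have "0 < 1 - \<rho>\<^sup>2"
    using one_minus_r_squared_pos zero_less_mult_pos by metis
  then have "\<bar>\<rho>\<bar> < 1"
    by (simp add: abs_square_less_1)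
  then show ?thesis
    using assms sdY_with_sdX_pos
    by (simp add: bvn_valid_def prior_with_sdX_def sdX_def sdY_def corr_def \<rho>_def)
qed

lemma rel_entropy_prior_with_sdX:
  assumes "0 < s"
  shows "rel_entropy (prior_with_sdX s) (mX, mY, sX, sY, r) = var_divergence ((s / sX)\<^sup>2)"
proof -
  define t where "t = sdY_with_sdX s"
  define \<rho> where "\<rho> = r * (s / sX) * sY / sdY_with_sdX s"
  have q: "prior_with_sdX s = (mX, mY, s, t, \<rho>)"
    by (simp add: prior_with_sdX_def t_def \<rho>_def)
  then have t: "0 < t" and \<rho>: "\<bar>\<rho>\<bar> < 1"
    using bvn_valid_prior_with_sdX[OF assms] by (simp_all add: bvn_valid_def sdY_def corr_def)
  show ?thesis
    unfolding q rel_entropy_bvn_decomposition[OF assms t \<rho> sX sY r]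
      prior_with_sdX_regression[of s, folded t_def \<rho>_def]
    using one_minus_r_squared_pos by simp
qed

lemma rel_entropy_ge_var_divergence:
  assumes "bvn_valid q"
  shows "var_divergence ((sdX q / sX)\<^sup>2) \<le> rel_entropy q (mX, mY, sX, sY, r)"
proof -
  obtain a b s t \<rho> where q: "q = (a, b, s, t, \<rho>)"
    using prod_cases5 by blast
  have s: "0 < s" and t: "0 < t" and \<rho>: "\<bar>\<rho>\<bar> < 1"
    using assms by (auto simp: q bvn_valid_def sdX_def sdY_def corr_def)
  have "0 < 1 - \<rho>\<^sup>2"
    using \<rho> by (simp add: abs_square_less_1)
  then have "0 \<le> var_divergence ((t / sY)\<^sup>2 * (1 - \<rho>\<^sup>2) / (1 - r\<^sup>2))"
    using one_minus_r_squared_pos t sY by (intro var_divergence_nonneg) simp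
  then show ?thesis
    unfolding q rel_entropy_bvn_decomposition[OF s t \<rho> sX sY r]
    using one_minus_r_squared_pos by (simp add: sdX_def)
qed

lemma rel_entropy_le_var_divergence_imp_Y_marginal:
  assumes "bvn_valid q" and "rel_entropy q (mX, mY, sX, sY, r) \<le> var_divergence ((sdX q / sX)\<^sup>2)"
  shows "muY q = mY" and "sdY q = sdY_with_sdX (sdX q)"
proof -
  obtain a b s t \<rho> where q: "q = (a, b, s, t, \<rho>)"
    using prod_cases5 by blast
  have s: "0 < s" and t: "0 < t" and \<rho>: "\<bar>\<rho>\<bar> < 1"
    using assms by (auto simp: q bvn_valid_def sdX_def sdY_def corr_def)
  define mean where
    "mean = (((a - mX) / sX - r * ((b - mY) / sY))\<^sup>2 + (1 - r\<^sup>2) * ((b - mY) / sY)\<^sup>2) / (2 * (1 - r\<^sup>2))"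
  define cov where "cov = (\<rho> * (t / sY) - r * (s / sX))\<^sup>2 / (2 * (1 - r\<^sup>2))"
  define Z where "Z = (t / sY)\<^sup>2 * (1 - \<rho>\<^sup>2) / (1 - r\<^sup>2)"
  have "0 < 1 - \<rho>\<^sup>2"
    using \<rho> by (simp add: abs_square_less_1)
  then have "0 < Z"
    using one_minus_r_squared_pos t sY by (simp add: Z_def)
  have "0 \<le> mean" "0 \<le> cov"
    using one_minus_r_squared_pos by (simp_all add: mean_def cov_def)
  moreover have "mean + cov + var_divergence Z \<le> 0"
    using assms(2)
    unfolding q rel_entropy_bvn_decomposition[OF s t \<rho> sX sY r] mean_def[symmetric] cov_def[symmetric]
      Z_def[symmetric]
    by (simp add: sdX_def)
  moreover note var_divergence_nonneg[OF \<open>0 < Z\<close>]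
  ultimately have "mean = 0" "cov = 0" "var_divergence Z \<le> 0"
    by linarith+
  then have "(1 - r\<^sup>2) * ((b - mY) / sY)\<^sup>2 = 0" and slope: "\<rho> * (t / sY) = r * (s / sX)"
    using one_minus_r_squared_pos unfolding mean_def cov_def
    by (simp_all add: add_nonneg_eq_0_iff)
  then show "muY q = mY"
    using one_minus_r_squared_pos sY by (simp add: q muY_def)
  have "Z = 1"
    using var_divergence_pos[OF \<open>0 < Z\<close>] \<open>var_divergence Z \<le> 0\<close> by fastforce
  then have resid: "(t / sY)\<^sup>2 * (1 - \<rho>\<^sup>2) = 1 - r\<^sup>2"
    using one_minus_r_squared_pos by (simp add: Z_def)
  have "t = sdY_with_sdX s"
    using t slope resid by (rule regression_imp_sdY_with_sdX)
  then show "sdY q = sdY_with_sdX (sdX q)"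
    by (simp add: q sdY_def sdX_def)
qed

lemma CoVaR_is_sdX_view_minimiser:
  assumes s0: "0 < s0" "P s0"
    and unique_min: "\<And>s. 0 < s \<Longrightarrow> P s \<Longrightarrow> s \<noteq> s0 \<Longrightarrow>
      var_divergence ((s0 / sX)\<^sup>2) < var_divergence ((s / sX)\<^sup>2)"
  shows "CoVaR_is \<alpha> (mX, mY, sX, sY, r) (\<lambda>q. P (sdX q)) (mY + sdY_with_sdX s0 * Phi_inv \<alpha>)"
proof -
  define prior where "prior = (mX, mY, sX, sY, r)"
  define q0 where "q0 = prior_with_sdX s0"
  have q0: "bvn_valid q0" "P (sdX q0)" "rel_entropy q0 prior = var_divergence ((s0 / sX)\<^sup>2)"
    using s0 bvn_valid_prior_with_sdX rel_entropy_prior_with_sdX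
    by (simp_all add: q0_def prior_def prior_with_sdX_simps)
  have sdX_pos: "0 < sdX q" if "bvn_valid q" for q
    using that by (simp add: bvn_valid_def)
  note ge = rel_entropy_ge_var_divergence[folded prior_def]
  have lower: "rel_entropy q0 prior \<le> rel_entropy q prior" if "bvn_valid q" "P (sdX q)" for q
  proof (cases "sdX q = s0")
    case True
    then show ?thesis using ge[OF that(1)] q0(3) by simp
  next
    case False
    then show ?thesis using unique_min[OF sdX_pos[OF that(1)] that(2)] ge[OF that(1)] q0(3) by simp
  qed
  have "is_posterior prior (\<lambda>q. P (sdX q)) q0"
    unfolding is_posterior_def using q0 lower by blast
  moreover have "muY q + sdY q * Phi_inv \<alpha> = mY + sdY_with_sdX s0 * Phi_inv \<alpha>"
    if "is_posterior prior (\<lambda>q. P (sdX q)) q" for q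
  proof -
    have q: "bvn_valid q" "P (sdX q)" and le: "rel_entropy q prior \<le> rel_entropy q0 prior"
      using that q0 unfolding is_posterior_def by blast+
    have "sdX q = s0"
      using unique_min[OF sdX_pos[OF q(1)] q(2)] ge[OF q(1)] le q0(3) by fastforce
    then have "rel_entropy q prior \<le> var_divergence ((sdX q / sX)\<^sup>2)"
      using le q0(3) by simp
    then show ?thesis
      using rel_entropy_le_var_divergence_imp_Y_marginal[OF q(1), folded prior_def] \<open>sdX q = s0\<close> by simp
  qed
  ultimately show ?thesis
    unfolding CoVaR_is_def prior_def by blast
qed

lemma CoVaR_is_prior_feasible:
  assumes "P sX"
  shows "CoVaR_is \<alpha> (mX, mY, sX, sY, r) (\<lambda>q. P (sdX q)) (VaR \<alpha> (mX, mY, sX, sY, r))"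
proof -
  have "var_divergence ((sX / sX)\<^sup>2) < var_divergence ((s / sX)\<^sup>2)"
    if "0 < s" "P s" "s \<noteq> sX" for s
  proof -
    have "(s / sX)\<^sup>2 \<noteq> 1"
      using that sX by (simp add: power_divide)
    then show ?thesis
      using var_divergence_pos[of "(s / sX)\<^sup>2"] that sX by simp
  qed
  from CoVaR_is_sdX_view_minimiser[of sX P, OF sX assms this] show ?thesis
    by (simp add: VaR_def muY_def sdY_def sdY_with_sdX_prior)
qed

lemma CoVaR_is_sdX_eq:
  assumes "0 < s1"
  shows "CoVaR_is \<alpha> (mX, mY, sX, sY, r) (\<lambda>q. (sdX q)\<^sup>2 = s1\<^sup>2) (mY + sdY_with_sdX s1 * Phi_inv \<alpha>)"
  using CoVaR_is_sdX_view_minimiser[of s1 "\<lambda>s. s\<^sup>2 = s1\<^sup>2"] assms by simp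

lemma CoVaR_is_sdX_le_binding:
  assumes "0 < s1" and "s1 < sX"
  shows "CoVaR_is \<alpha> (mX, mY, sX, sY, r) (\<lambda>q. (sdX q)\<^sup>2 \<le> s1\<^sup>2) (mY + sdY_with_sdX s1 * Phi_inv \<alpha>)"
proof (rule CoVaR_is_sdX_view_minimiser[of s1 "\<lambda>s. s\<^sup>2 \<le> s1\<^sup>2"])
  fix s assume "0 < s" "s\<^sup>2 \<le> s1\<^sup>2" "s \<noteq> s1"
  then have "(s / sX)\<^sup>2 < (s1 / sX)\<^sup>2" "(s1 / sX)\<^sup>2 \<le> 1"
    using assms sX by (simp_all add: power_divide divide_strict_right_mono power_strict_mono)
  then show "var_divergence ((s1 / sX)\<^sup>2) < var_divergence ((s / sX)\<^sup>2)"
    using \<open>0 < s\<close> sX by (intro var_divergence_strict_antimono) simp_all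
qed (use assms in simp_all)

lemma CoVaR_is_sdX_ge_binding:
  assumes "sX < s1"
  shows "CoVaR_is \<alpha> (mX, mY, sX, sY, r) (\<lambda>q. (sdX q)\<^sup>2 \<ge> s1\<^sup>2) (mY + sdY_with_sdX s1 * Phi_inv \<alpha>)"
proof (rule CoVaR_is_sdX_view_minimiser[of s1 "\<lambda>s. s\<^sup>2 \<ge> s1\<^sup>2"])
  fix s assume "0 < s" "s\<^sup>2 \<ge> s1\<^sup>2" "s \<noteq> s1"
  then have "(s1 / sX)\<^sup>2 < (s / sX)\<^sup>2" "1 \<le> (s1 / sX)\<^sup>2"
    using assms sX by (simp_all add: power_divide divide_strict_right_mono power_strict_mono)
  then show "var_divergence ((s1 / sX)\<^sup>2) < var_divergence ((s / sX)\<^sup>2)"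
    by (intro var_divergence_strict_mono)
qed (use assms sX in simp_all)

end

theorem theorem3p2:
  fixes mX mY sX sY r s1 \<alpha> :: real
  assumes "sX > 0" and "sY > 0" and "\<bar>r\<bar> < 1" and "s1 > 0"
    and "0 < \<alpha>" and "\<alpha> < 1"
  defines "prior \<equiv> (mX, mY, sX, sY, r)"
    and "c_eq \<equiv> mY + sY * sqrt (1 - r\<^sup>2 + r\<^sup>2 * s1\<^sup>2 / sX\<^sup>2) * Phi_inv \<alpha>"
  shows "CoVaR_is \<alpha> prior (\<lambda>q. (sdX q)\<^sup>2 = s1\<^sup>2) c_eq
    \<and> (sX\<^sup>2 \<le> s1\<^sup>2 \<longrightarrow> CoVaR_is \<alpha> prior (\<lambda>q. (sdX q)\<^sup>2 \<le> s1\<^sup>2) (VaR \<alpha> prior))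
    \<and> (sX\<^sup>2 > s1\<^sup>2 \<longrightarrow> CoVaR_is \<alpha> prior (\<lambda>q. (sdX q)\<^sup>2 \<le> s1\<^sup>2) c_eq)
    \<and> (sX\<^sup>2 \<ge> s1\<^sup>2 \<longrightarrow> CoVaR_is \<alpha> prior (\<lambda>q. (sdX q)\<^sup>2 \<ge> s1\<^sup>2) (VaR \<alpha> prior))
    \<and> (sX\<^sup>2 < s1\<^sup>2 \<longrightarrow> CoVaR_is \<alpha> prior (\<lambda>q. (sdX q)\<^sup>2 \<ge> s1\<^sup>2) c_eq)"
proof -
  note prior = assms(1-3)
  have c_eq: "c_eq = mY + sdY_with_sdX sX sY r s1 * Phi_inv \<alpha>"
    by (simp add: c_eq_def sdY_with_sdX_def[OF prior])
  have "s1\<^sup>2 < sX\<^sup>2 \<Longrightarrow> s1 < sX" and "sX\<^sup>2 < s1\<^sup>2 \<Longrightarrow> sX < s1"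
    using assms(1,4) by (simp_all add: power_less_imp_less_base)
  then show ?thesis
    unfolding prior_def c_eq
    using CoVaR_is_sdX_eq[OF prior assms(4)] CoVaR_is_sdX_le_binding[OF prior assms(4)]
      CoVaR_is_sdX_ge_binding[OF prior]
      CoVaR_is_prior_feasible[OF prior, of "\<lambda>s. s\<^sup>2 \<le> s1\<^sup>2"]
      CoVaR_is_prior_feasible[OF prior, of "\<lambda>s. s1\<^sup>2 \<le> s\<^sup>2"]
    by blast
qed

end
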